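(* Let $B=(b_{jk})_{1\le j,k\le n}$ be a complex matrix with units on the diagonal such that $|b_{jk}|<3/2$ whenever $j<k$ and $|b_{jk}|<4^{-n}$ whenever $j>k$. Then $B$ is non-degenerate. *)

theory Defs
  imports Complex_Main "Jordan_Normal_Form.Determinant"
begin

end

theory Submission
  imports Defs
begin

text \<open>
  Suppose \<open>B x = 0\<close> with \<open>x \<noteq> 0\<close>, let \<open>S = max\<^sub>k |x\<^sub>k|\<close> and let
  \<open>T\<^sub>j = \<Sum>\<^sub>k\<^sub>\<ge>\<^sub>j |x\<^sub>k|\<close> be the tail sums. Solving row \<open>j\<close> for its diagonal
  term gives \<open>|x\<^sub>j| \<le> 3/2 T\<^sub>j\<^sub>+\<^sub>1 + n 4\<^sup>-\<^sup>n S\<close>, hence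
  \<open>T\<^sub>j \<le> 5/2 T\<^sub>j\<^sub>+\<^sub>1 + n 4\<^sup>-\<^sup>n S\<close>. Unrolling this recurrence from \<open>T\<^sub>n = 0\<close>
  yields \<open>T\<^sub>0 \<le> n (5/8)\<^sup>n S < S\<close>, while \<open>S \<le> T\<^sub>0\<close>.
\<close>

lemma sum_lessThan_split_at:
  fixes f :: "nat \<Rightarrow> 'a::comm_monoid_add"
  assumes "j < n"
  shows "(\<Sum>k<n. f k) = (\<Sum>k<j. f k) + f j + (\<Sum>k\<in>{Suc j..<n}. f k)"
proof -
  have "{..<n} = {..<j} \<union> {j..<n}" using assms by auto
  then have "(\<Sum>k<n. f k) = (\<Sum>k<j. f k) + (\<Sum>k\<in>{j..<n}. f k)"
    by (metis finite_atLeastLessThan finite_lessThan ivl_disj_int(2) sum.union_disjoint)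
  then show ?thesis using assms by (simp add: sum.atLeast_Suc_lessThan add.assoc)
qed

lemma norm_le_offdiag_row_bound:
  fixes b x :: "nat \<Rightarrow> 'a::real_normed_algebra_1"
  assumes row: "(\<Sum>k<n. b k * x k) = 0" and j: "j < n" and diag: "b j = 1"
    and upper: "\<And>k. j < k \<Longrightarrow> k < n \<Longrightarrow> norm (b k) \<le> u"
    and lower: "\<And>k. k < j \<Longrightarrow> norm (b k) \<le> \<epsilon>"
    and bound: "\<And>k. k < n \<Longrightarrow> norm (x k) \<le> S"
  shows "norm (x j) \<le> u * (\<Sum>k\<in>{Suc j..<n}. norm (x k)) + real j * \<epsilon> * S"
proof -
  have "x j = - ((\<Sum>k<j. b k * x k) + (\<Sum>k\<in>{Suc j..<n}. b k * x k))"
    using row sum_lessThan_split_at[OF j, of "\<lambda>k. b k * x k"] diag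
    by (simp add: eq_neg_iff_add_eq_0 algebra_simps)
  then have "norm (x j) \<le> norm (\<Sum>k<j. b k * x k) + norm (\<Sum>k\<in>{Suc j..<n}. b k * x k)"
    by (metis norm_minus_cancel norm_triangle_ineq)
  also have "norm (\<Sum>k<j. b k * x k) \<le> (\<Sum>k<j. \<epsilon> * S)"
    using j lower bound
    by (intro sum_norm_le order.trans[OF norm_mult_ineq] mult_mono) (auto intro: order.trans[OF norm_ge_zero])
  also have "norm (\<Sum>k\<in>{Suc j..<n}. b k * x k) \<le> (\<Sum>k\<in>{Suc j..<n}. u * norm (x k))"
    using upper
    by (intro sum_norm_le order.trans[OF norm_mult_ineq] mult_right_mono) auto
  finally show ?thesis by (simp add: sum_distrib_left mult.assoc)
qed

lemma backward_recurrence_bound: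
  fixes T :: "nat \<Rightarrow> 'a::linordered_idom"
  assumes "a \<ge> 0" and "\<And>j. j < n \<Longrightarrow> T j \<le> a * T (Suc j) + d"
  shows "T 0 \<le> a ^ n * T n + d * (\<Sum>i<n. a ^ i)"
  using assms(2)
proof (induction n arbitrary: T)
  case 0
  then show ?case by simp
next
  case (Suc n)
  have "T (Suc 0) \<le> a ^ n * T (Suc n) + d * (\<Sum>i<n. a ^ i)"
    using Suc.IH[of "\<lambda>j. T (Suc j)"] Suc.prems by simp
  then have "T 0 \<le> a * (a ^ n * T (Suc n) + d * (\<Sum>i<n. a ^ i)) + d"
    using Suc.prems[of 0] assms(1) by (meson add_right_mono mult_left_mono order.trans zero_less_Suc)
  moreover have "(\<Sum>i<Suc n. a ^ i) = 1 + a * (\<Sum>i<n. a ^ i)"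
    by (subst sum.lessThan_Suc_shift) (simp add: sum_distrib_left)
  ultimately show ?case by (simp add: algebra_simps)
qed

lemma sum_powers_less_power:
  fixes a :: "'a::linordered_semidom"
  assumes "2 \<le> a"
  shows "(\<Sum>i<n. a ^ i) < a ^ n"
proof (induction n)
  case 0
  then show ?case by simp
next
  case (Suc n)
  have "(\<Sum>i<Suc n. a ^ i) < a ^ n + a ^ n" using Suc by simp
  also have "\<dots> = 2 * a ^ n" by (simp add: mult_2)
  also have "\<dots> \<le> a ^ Suc n"
    using assms by (simp add: mult_right_mono order.trans[OF zero_le_numeral assms])
  finally show ?case .
qed

lemma nat_mult_five_pow_less_eight_pow: "n * 5 ^ n < (8::nat) ^ n"
proof (induction n rule: less_induct)
  case (less n)
  show ?case
  proof (cases "n \<le> 2")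
    case True
    then have "n = 0 \<or> n = 1 \<or> n = 2" by auto
    then show ?thesis by auto
  next
    case False
    then obtain m where n: "n = Suc m" and "2 \<le> m" by (cases n) auto
    have "n * 5 ^ n = 5 * Suc m * 5 ^ m" unfolding n by (simp add: algebra_simps)
    also have "\<dots> \<le> 8 * m * 5 ^ m" using \<open>2 \<le> m\<close> by (intro mult_right_mono) auto
    also have "\<dots> < 8 * 8 ^ m" using less.IH[of m] n by simp
    finally show ?thesis using n by simp
  qed
qed

lemma real_mult_five_eighths_pow_less_1: "real n * (5 / 8) ^ n < 1"
proof -
  have "real (n * 5 ^ n) < real (8 ^ n)" using nat_mult_five_pow_less_eight_pow of_nat_less_iff by blast
  then have "real n * 5 ^ n < 8 ^ n" by simp
  then show ?thesis by (simp add: power_divide field_simps)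
qed

lemma nearly_upper_triangular_kernel_trivial:
  fixes b :: "nat \<Rightarrow> nat \<Rightarrow> 'a::real_normed_algebra_1" and x :: "nat \<Rightarrow> 'a"
  assumes kernel: "\<And>j. j < n \<Longrightarrow> (\<Sum>k<n. b j k * x k) = 0"
    and diag: "\<And>j. j < n \<Longrightarrow> b j j = 1"
    and upper: "\<And>j k. j < k \<Longrightarrow> k < n \<Longrightarrow> norm (b j k) \<le> 3 / 2"
    and lower: "\<And>j k. k < j \<Longrightarrow> j < n \<Longrightarrow> norm (b j k) \<le> 1 / 4 ^ n"
    and i: "i < n"
  shows "x i = 0"
proof (rule ccontr)
  assume "x i \<noteq> 0"
  define S where "S = Max ((\<lambda>k. norm (x k)) ` {..<n})"
  have le_S: "norm (x k) \<le> S" if "k < n" for k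
    unfolding S_def using that by (intro Max_ge) auto
  obtain k where k: "k < n" "S = norm (x k)"
    unfolding S_def using i Max_in[of "(\<lambda>k. norm (x k)) ` {..<n}"] by fastforce
  have "S > 0" using le_S[OF i] \<open>x i \<noteq> 0\<close> by (meson less_le_trans zero_less_norm_iff)
  define T where "T j = (\<Sum>k\<in>{j..<n}. norm (x k))" for j
  define \<delta> where "\<delta> = real n * (1 / 4 ^ n) * S"
  have "\<delta> \<ge> 0" unfolding \<delta>_def using \<open>S > 0\<close> by simp
  have T_step: "T j \<le> 5 / 2 * T (Suc j) + \<delta>" if j: "j < n" for j
  proof -
    have "norm (x j) \<le> 3 / 2 * T (Suc j) + real j * (1 / 4 ^ n) * S"
      unfolding T_def using kernel diag upper lower le_S j
      by (intro norm_le_offdiag_row_bound[where b = "b j"]) auto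
    also have "real j * (1 / 4 ^ n) * S \<le> \<delta>"
      unfolding \<delta>_def using j \<open>S > 0\<close> by (intro mult_right_mono) auto
    finally show ?thesis
      using j by (simp add: T_def sum.atLeast_Suc_lessThan)
  qed
  have "T 0 \<le> (5 / 2) ^ n * T n + \<delta> * (\<Sum>i<n. (5 / 2) ^ i)"
    using T_step by (intro backward_recurrence_bound) auto
  also have "\<dots> \<le> \<delta> * (5 / 2) ^ n"
    using sum_powers_less_power[of "5 / 2 :: real" n] \<open>\<delta> \<ge> 0\<close>
    by (simp add: T_def mult_left_mono)
  also have "\<dots> = real n * (5 / 8) ^ n * S"
  proof -
    have "(5 / 8 :: real) ^ n = (5 / 2) ^ n / 4 ^ n"
      by (simp flip: power_divide)
    then show ?thesis by (simp add: \<delta>_def)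
  qed
  also have "\<dots> < S"
    using real_mult_five_eighths_pow_less_1[of n] \<open>S > 0\<close> by simp
  finally have "T 0 < S" .
  moreover have "S \<le> T 0"
    unfolding T_def k(2) using k(1) by (intro member_le_sum) auto
  ultimately show False by simp
qed

theorem lemma9:
  fixes B :: "complex mat" and n :: nat
  assumes "B \<in> carrier_mat n n"
    and "\<And>j. j < n \<Longrightarrow> B $$ (j, j) = 1"
    and "\<And>j k. j < k \<Longrightarrow> k < n \<Longrightarrow> cmod (B $$ (j, k)) < 3 / 2"
    and "\<And>j k. k < j \<Longrightarrow> j < n \<Longrightarrow> cmod (B $$ (j, k)) < 1 / 4 ^ n"
  shows "det B \<noteq> 0"
proof
  assume "det B = 0"
  then obtain v where v: "v \<in> carrier_vec n" "v \<noteq> 0\<^sub>v n" "B *\<^sub>v v = 0\<^sub>v n"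
    using det_0_iff_vec_prod_zero[OF assms(1)] by blast
  have "(\<Sum>k<n. B $$ (j, k) * v $ k) = 0" if "j < n" for j
  proof -
    have "(B *\<^sub>v v) $ j = row B j \<bullet> v"
      using assms(1) that by (intro index_mult_mat_vec) simp
    also have "\<dots> = (\<Sum>k<n. B $$ (j, k) * v $ k)"
      using assms(1) v(1) that by (simp add: scalar_prod_def atLeast0LessThan)
    finally show ?thesis using v(3) that by simp
  qed
  then have "v $ i = 0" if "i < n" for i
    using nearly_upper_triangular_kernel_trivial[of n "\<lambda>j k. B $$ (j, k)" "\<lambda>k. v $ k"]
      assms(2-4) that by (auto simp: less_imp_le)
  then have "v = 0\<^sub>v n" using v(1) by (intro eq_vecI) auto
  with v(2) show False ..
qed

end
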